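(* Let $P$ be a finite poset and $R$ a commutative unital ring. If $D$ is a derivation of $I^3(P,R)$, then $D=0$.
   Context: For a finite poset $P$, let $P^3_\le=\{(x,y,z)\in P^3: x\le y\le z\}$. The third partial flag incidence algebra $I^3(P,R)$ is the $R$-module of all functions $f:P^3_\le\to R$ (pointwise operations) with the (non-associative) multiplication $(fg)(x_1,x_2,x_3)=\sum f(x_1,y_1,y_2)\,g(y_1,y_2,x_3)$, the sum over all $y_1,y_2$ with $x_1\le y_1\le x_2\le y_2\le x_3$. A derivation of $I^3(P,R)$ is an $R$-linear map $D:I^3(P,R)\to I^3(P,R)$ such that $D(fg)=D(f)g+fD(g)$ for all $f,g$. *)

theory Defs
  imports Main
begin

text \<open>An element of the third partial flag incidence algebra
I^3(P,R) is a function on P^3_le; we represent it by a function of three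
arguments that vanishes outside P^3_le.\<close>

definition chain3 :: "'a::order \<Rightarrow> 'a \<Rightarrow> 'a \<Rightarrow> bool" where
  "chain3 x y z \<longleftrightarrow> x \<le> y \<and> y \<le> z"

definition I3 :: "('a::{finite,order} \<Rightarrow> 'a \<Rightarrow> 'a \<Rightarrow> 'r::comm_ring_1) set" where
  "I3 = {f. \<forall>x y z. \<not> chain3 x y z \<longrightarrow> f x y z = 0}"

definition I3_mult ::
  "('a::{finite,order} \<Rightarrow> 'a \<Rightarrow> 'a \<Rightarrow> 'r::comm_ring_1) \<Rightarrow> ('a \<Rightarrow> 'a \<Rightarrow> 'a \<Rightarrow> 'r)
     \<Rightarrow> ('a \<Rightarrow> 'a \<Rightarrow> 'a \<Rightarrow> 'r)" where
  "I3_mult f g = (\<lambda>x1 x2 x3. if chain3 x1 x2 x3 then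
      (\<Sum>(y1, y2) \<in> {(y1, y2). x1 \<le> y1 \<and> y1 \<le> x2 \<and> x2 \<le> y2 \<and> y2 \<le> x3}.
          f x1 y1 y2 * g y1 y2 x3)
    else 0)"

definition I3_derivation ::
  "(('a::{finite,order} \<Rightarrow> 'a \<Rightarrow> 'a \<Rightarrow> 'r::comm_ring_1) \<Rightarrow> ('a \<Rightarrow> 'a \<Rightarrow> 'a \<Rightarrow> 'r)) \<Rightarrow> bool" where
  "I3_derivation D \<longleftrightarrow>
     (\<forall>f \<in> I3. D f \<in> I3) \<and>
     (\<forall>f \<in> I3. \<forall>g \<in> I3. D (\<lambda>x y z. f x y z + g x y z) = (\<lambda>x y z. D f x y z + D g x y z)) \<and>
     (\<forall>c. \<forall>f \<in> I3. D (\<lambda>x y z. c * f x y z) = (\<lambda>x y z. c * D f x y z)) \<and>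
     (\<forall>f \<in> I3. \<forall>g \<in> I3. D (I3_mult f g) = (\<lambda>x y z. I3_mult (D f) g x y z + I3_mult f (D g) x y z))"

end

theory Submission
  imports Defs
begin

text \<open>Write e_abc for \<open>I3_basis a b c\<close>. For chains a \<le> b \<le> c these functions span
  I3, so it suffices to show that a derivation D kills each of them. A product e_pqr e_stu
  vanishes unless (s, t) = (q, r), and the Leibniz rule applied to such vanishing products
  kills most entries of D(e_abc). For the idempotent e_aaa this, together with
  D(e_aaa) = D(e_aaa) e_aaa + e_aaa D(e_aaa), gives D(e_aaa) = 0, so D commutes with
  multiplication by e_aaa. The product S = e_aab e_abb satisfies S e_bbb = e_abb and
  e_aaa S = e_aab; comparing these with the Leibniz rule for S shows that the diagonal
  entries D(e_aab)(a,a,b) and D(e_abb)(a,b,b) vanish, hence D(e_aab) = D(e_abb) = 0.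
  Finally e_abc = e_abb e_bbc.\<close>

definition I3_basis :: "'a::{finite,order} \<Rightarrow> 'a \<Rightarrow> 'a \<Rightarrow> ('a \<Rightarrow> 'a \<Rightarrow> 'a \<Rightarrow> 'r::comm_ring_1)" where
  "I3_basis a b c = (\<lambda>x y z. if x = a \<and> y = b \<and> z = c then 1 else 0)"

lemma zero_in_I3: "(\<lambda>x y z. 0) \<in> I3"
  unfolding I3_def by simp

lemma I3_vanishes: "f \<in> I3 \<Longrightarrow> \<not> chain3 x y z \<Longrightarrow> f x y z = 0"
  unfolding I3_def by blast

lemma I3_basis_in_I3: "chain3 a b c \<Longrightarrow> I3_basis a b c \<in> I3"
  unfolding I3_def I3_basis_def by auto

lemma I3_mult_in_I3: "I3_mult f g \<in> I3"
  unfolding I3_def I3_mult_def by auto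

lemma I3_mult_zero_left: "I3_mult (\<lambda>x y z. 0) f = (\<lambda>x y z. 0)"
  unfolding I3_mult_def by (simp add: fun_eq_iff)

lemma I3_mult_zero_right: "I3_mult f (\<lambda>x y z. 0) = (\<lambda>x y z. 0)"
  unfolding I3_mult_def by (simp add: fun_eq_iff)

lemma I3_mult_basis_left:
  "I3_mult (I3_basis p q r) h x1 x2 x3 =
     (if x1 = p \<and> p \<le> q \<and> q \<le> x2 \<and> x2 \<le> r \<and> r \<le> x3 then h q r x3 else 0)"
proof -
  let ?S = "{(y1, y2). x1 \<le> y1 \<and> y1 \<le> x2 \<and> x2 \<le> y2 \<and> y2 \<le> x3}"
  have "(\<Sum>(y1, y2) \<in> ?S. I3_basis p q r x1 y1 y2 * h y1 y2 x3) =
        (\<Sum>y \<in> ?S. if y = (q, r) then (if x1 = p then h q r x3 else 0) else 0)"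
    by (rule sum.cong) (auto simp: I3_basis_def split: if_splits)
  also have "\<dots> = (if (q, r) \<in> ?S then (if x1 = p then h q r x3 else 0) else 0)"
    by (simp add: sum.delta)
  finally show ?thesis
    unfolding I3_mult_def by (auto simp: chain3_def)
qed

lemma I3_mult_basis_right:
  "I3_mult h (I3_basis p q r) x1 x2 x3 =
     (if x3 = r \<and> x1 \<le> p \<and> p \<le> x2 \<and> x2 \<le> q \<and> q \<le> r then h x1 p q else 0)"
proof -
  let ?S = "{(y1, y2). x1 \<le> y1 \<and> y1 \<le> x2 \<and> x2 \<le> y2 \<and> y2 \<le> x3}"
  have "(\<Sum>(y1, y2) \<in> ?S. h x1 y1 y2 * I3_basis p q r y1 y2 x3) =
        (\<Sum>y \<in> ?S. if y = (p, q) then (if x3 = r then h x1 p q else 0) else 0)"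
    by (rule sum.cong) (auto simp: I3_basis_def split: if_splits)
  also have "\<dots> = (if (p, q) \<in> ?S then (if x3 = r then h x1 p q else 0) else 0)"
    by (simp add: sum.delta)
  finally show ?thesis
    unfolding I3_mult_def by (auto simp: chain3_def)
qed

lemma I3_mult_basis_basis_eq_0:
  "(s, t) \<noteq> (q, r) \<Longrightarrow> I3_mult (I3_basis p q r) (I3_basis s t u) = (\<lambda>x y z. 0)"
  unfolding fun_eq_iff I3_mult_basis_left by (auto simp: I3_basis_def)

lemma I3_mult_basis_chain: "a \<le> b \<Longrightarrow> b \<le> c \<Longrightarrow> I3_mult (I3_basis a b b) (I3_basis b b c) = I3_basis a b c"
  unfolding fun_eq_iff I3_mult_basis_left by (auto simp: I3_basis_def)

lemma I3_linear_map_eq_0: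
  fixes D :: "('a::{finite,order} \<Rightarrow> 'a \<Rightarrow> 'a \<Rightarrow> 'r::comm_ring_1) \<Rightarrow> ('a \<Rightarrow> 'a \<Rightarrow> 'a \<Rightarrow> 'r)"
  assumes add: "\<And>f g. f \<in> I3 \<Longrightarrow> g \<in> I3 \<Longrightarrow>
      D (\<lambda>x y z. f x y z + g x y z) = (\<lambda>x y z. D f x y z + D g x y z)"
    and scale: "\<And>c f. f \<in> I3 \<Longrightarrow> D (\<lambda>x y z. c * f x y z) = (\<lambda>x y z. c * D f x y z)"
    and basis: "\<And>a b c. chain3 a b c \<Longrightarrow> D (I3_basis a b c) = (\<lambda>x y z. 0)"
    and f: "f \<in> I3"
  shows "D f = (\<lambda>x y z. 0)"
proof -
  have "D f = (\<lambda>x y z. 0)" if "f \<in> I3" "\<forall>x y z. (x, y, z) \<notin> S \<longrightarrow> f x y z = 0" for S f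
    using finite[of S] that
  proof (induction S arbitrary: f rule: finite_induct)
    case empty
    then have "f = (\<lambda>x y z. 0)" by (simp add: fun_eq_iff)
    then show ?case using scale[OF zero_in_I3, of 0] by simp
  next
    case (insert t S)
    obtain a b c where t: "t = (a, b, c)" by (cases t)
    define f' where "f' = (\<lambda>x y z. if (x, y, z) = (a, b, c) then 0 else f x y z)"
    have f'_in: "f' \<in> I3" using insert.prems(1) unfolding I3_def f'_def by auto
    have D_f': "D f' = (\<lambda>x y z. 0)"
      using insert.IH[OF f'_in] insert.prems(2) t unfolding f'_def by auto
    show ?case
    proof (cases "chain3 a b c")
      case False
      then have "f = f'"
        using I3_vanishes[OF insert.prems(1)] unfolding f'_def by (auto simp: fun_eq_iff)
      then show ?thesis using D_f' by simp
    next
      case True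
      let ?g = "\<lambda>x y z. f a b c * I3_basis a b c x y z"
      have g_in: "?g \<in> I3"
        using True unfolding I3_def I3_basis_def chain3_def by auto
      have D_g: "D ?g = (\<lambda>x y z. 0)"
        using scale[OF I3_basis_in_I3[OF True]] basis[OF True] by simp
      have "f = (\<lambda>x y z. f' x y z + ?g x y z)"
        unfolding f'_def I3_basis_def by (auto simp: fun_eq_iff)
      then show ?thesis using add[OF f'_in g_in] D_f' D_g by simp
    qed
  qed
  then show ?thesis using f by blast
qed

context
  fixes D :: "('a::{finite,order} \<Rightarrow> 'a \<Rightarrow> 'a \<Rightarrow> 'r::comm_ring_1) \<Rightarrow> ('a \<Rightarrow> 'a \<Rightarrow> 'a \<Rightarrow> 'r)"
  assumes D: "I3_derivation D"
begin

lemma derivation_add: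
  "f \<in> I3 \<Longrightarrow> g \<in> I3 \<Longrightarrow> D (\<lambda>x y z. f x y z + g x y z) = (\<lambda>x y z. D f x y z + D g x y z)"
  using D unfolding I3_derivation_def by blast

lemma derivation_scale: "f \<in> I3 \<Longrightarrow> D (\<lambda>x y z. c * f x y z) = (\<lambda>x y z. c * D f x y z)"
  using D unfolding I3_derivation_def by blast

lemma derivation_zero: "D (\<lambda>x y z. 0) = (\<lambda>x y z. 0)"
  using derivation_scale[OF zero_in_I3, of 0] by simp

lemma derivation_Leibniz:
  "f \<in> I3 \<Longrightarrow> g \<in> I3 \<Longrightarrow> D (I3_mult f g) x y z = I3_mult (D f) g x y z + I3_mult f (D g) x y z"
  using D unfolding I3_derivation_def by metis

lemma derivation_Leibniz_zero_product:
  assumes "f \<in> I3" "g \<in> I3" "I3_mult f g = (\<lambda>x y z. 0)"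
  shows "I3_mult (D f) g x y z + I3_mult f (D g) x y z = 0"
  using derivation_Leibniz[OF assms(1,2), of x y z] assms(3) derivation_zero by simp

lemma derivation_idempotent_basis: "D (I3_basis a a a) = (\<lambda>x y z. 0)"
proof -
  define h where "h = D (I3_basis a a a)"
  have e_aaa: "I3_basis a a a \<in> I3" by (rule I3_basis_in_I3) (simp add: chain3_def)
  have h_eq: "h x y z = I3_mult h (I3_basis a a a) x y z + I3_mult (I3_basis a a a) h x y z" for x y z
    using derivation_Leibniz[OF e_aaa e_aaa, of x y z]
    unfolding I3_mult_basis_chain[OF order_refl order_refl] h_def .
  have h_aaa: "h a a a = 0"
    using h_eq[of a a a] by (simp add: I3_mult_basis_left I3_mult_basis_right)
  have h_aab: "h a a z = 0" if "a \<le> z" for z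
  proof (cases "z = a")
    case False
    have e_azz: "I3_basis a z z \<in> I3" using that by (intro I3_basis_in_I3) (simp add: chain3_def)
    have orth: "I3_mult (I3_basis a a a) (I3_basis a z z) = (\<lambda>x y z. 0)"
      using False by (intro I3_mult_basis_basis_eq_0) simp
    have "\<not> z \<le> a" using that False by auto
    with derivation_Leibniz_zero_product[OF e_aaa e_azz orth, of a z z] show ?thesis
      using that by (simp add: I3_mult_basis_left I3_mult_basis_right h_def)
  qed (use h_aaa in simp)
  have h_xaa: "h x a a = 0" if "x \<le> a" for x
  proof (cases "x = a")
    case False
    have e_xxa: "I3_basis x x a \<in> I3" using that by (intro I3_basis_in_I3) (simp add: chain3_def)
    have orth: "I3_mult (I3_basis x x a) (I3_basis a a a) = (\<lambda>x y z. 0)"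
      using False by (intro I3_mult_basis_basis_eq_0) simp
    have "\<not> a \<le> x" using that False by auto
    with derivation_Leibniz_zero_product[OF e_xxa e_aaa orth, of x x a] show ?thesis
      using that by (simp add: I3_mult_basis_left I3_mult_basis_right h_def)
  qed (use h_aaa in simp)
  have "h x y z = 0" for x y z
    by (subst h_eq) (simp add: I3_mult_basis_left I3_mult_basis_right h_aab h_xaa)
  then show ?thesis unfolding h_def by (simp add: fun_eq_iff)
qed

lemma derivation_mult_idempotent_left:
  "f \<in> I3 \<Longrightarrow> D (I3_mult (I3_basis c c c) f) = I3_mult (I3_basis c c c) (D f)"
  using derivation_Leibniz[OF I3_basis_in_I3, of c c c f] derivation_idempotent_basis
  by (simp add: fun_eq_iff chain3_def I3_mult_zero_left)

lemma derivation_mult_idempotent_right: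
  "f \<in> I3 \<Longrightarrow> D (I3_mult f (I3_basis c c c)) = I3_mult (D f) (I3_basis c c c)"
  using derivation_Leibniz[OF _ I3_basis_in_I3, of f c c c] derivation_idempotent_basis
  by (simp add: fun_eq_iff chain3_def I3_mult_zero_right)

lemma derivation_basis_diagonal_entry:
  assumes "a < b"
  shows "D (I3_basis a a b) a a b = 0" and "D (I3_basis a b b) a b b = 0"
proof -
  have e_aab: "I3_basis a a b \<in> I3" and e_abb: "I3_basis a b b \<in> I3"
    using assms by (simp_all add: I3_basis_in_I3 chain3_def)
  define S :: "'a \<Rightarrow> 'a \<Rightarrow> 'a \<Rightarrow> 'r" where "S = I3_mult (I3_basis a a b) (I3_basis a b b)"
  have S_in: "S \<in> I3" unfolding S_def by (rule I3_mult_in_I3)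
  have "I3_mult S (I3_basis b b b) = I3_basis a b b"
    unfolding fun_eq_iff I3_mult_basis_right S_def I3_mult_basis_left
    using assms by (auto simp: I3_basis_def)
  then have D_abb: "D (I3_basis a b b) = I3_mult (D S) (I3_basis b b b)"
    using derivation_mult_idempotent_right[OF S_in, of b] by simp
  have "I3_mult (I3_basis a a a) S = I3_basis a a b"
    unfolding fun_eq_iff I3_mult_basis_left S_def
    using assms by (auto simp: I3_basis_def)
  then have D_aab: "D (I3_basis a a b) = I3_mult (I3_basis a a a) (D S)"
    using derivation_mult_idempotent_left[OF S_in, of a] by simp
  have D_S: "D S a y b = D (I3_basis a a b) a a b + D (I3_basis a b b) a b b"
    if "y = a \<or> y = b" for y
    using derivation_Leibniz[OF e_aab e_abb, of a y b] assms that
    by (auto simp: S_def I3_mult_basis_left I3_mult_basis_right)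
  have "D S a b b = D (I3_basis a b b) a b b"
    unfolding D_abb using assms by (simp add: I3_mult_basis_right less_imp_le)
  with D_S[of b] show "D (I3_basis a a b) a a b = 0" by simp
  have "D S a a b = D (I3_basis a a b) a a b"
    unfolding D_aab using assms by (simp add: I3_mult_basis_left less_imp_le)
  with D_S[of a] show "D (I3_basis a b b) a b b = 0" by simp
qed

lemma derivation_basis_abb:
  assumes "a \<le> b"
  shows "D (I3_basis a b b) = (\<lambda>x y z. 0)"
proof (cases "a = b")
  case True
  then show ?thesis using derivation_idempotent_basis by simp
next
  case False
  with assms have "a < b" by simp
  have e_abb: "I3_basis a b b \<in> I3" using assms by (simp add: I3_basis_in_I3 chain3_def)
  have supp: "D (I3_basis a b b) = I3_mult (D (I3_basis a b b)) (I3_basis b b b)"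
    using derivation_mult_idempotent_right[OF e_abb, of b]
    unfolding I3_mult_basis_chain[OF assms order_refl] .
  have col: "D (I3_basis a b b) x b b = 0" if "x \<le> b" for x
  proof (cases "x = a")
    case True
    then show ?thesis using derivation_basis_diagonal_entry(2)[OF \<open>a < b\<close>] by simp
  next
    case False
    have e_xxb: "I3_basis x x b \<in> I3" using that by (simp add: I3_basis_in_I3 chain3_def)
    have orth: "I3_mult (I3_basis x x b) (I3_basis a b b) = (\<lambda>x y z. 0)"
      using False by (intro I3_mult_basis_basis_eq_0) simp
    have "\<not> (x \<le> a \<and> a \<le> x)" using False by auto
    with derivation_Leibniz_zero_product[OF e_xxb e_abb orth, of x x b] show ?thesis
      using that by (simp add: I3_mult_basis_left I3_mult_basis_right)
  qed
  have "D (I3_basis a b b) x y z = 0" for x y z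
    by (subst supp) (simp add: I3_mult_basis_right col)
  then show ?thesis by (simp add: fun_eq_iff)
qed

lemma derivation_basis_aab:
  assumes "a \<le> b"
  shows "D (I3_basis a a b) = (\<lambda>x y z. 0)"
proof (cases "a = b")
  case True
  then show ?thesis using derivation_idempotent_basis by simp
next
  case False
  with assms have "a < b" by simp
  have e_aab: "I3_basis a a b \<in> I3" using assms by (simp add: I3_basis_in_I3 chain3_def)
  have supp: "D (I3_basis a a b) = I3_mult (I3_basis a a a) (D (I3_basis a a b))"
    using derivation_mult_idempotent_left[OF e_aab, of a]
    unfolding I3_mult_basis_chain[OF order_refl assms] .
  have row: "D (I3_basis a a b) a a z = 0" if "a \<le> z" for z
  proof (cases "z = b")
    case True
    then show ?thesis using derivation_basis_diagonal_entry(1)[OF \<open>a < b\<close>] by simp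
  next
    case False
    have e_azz: "I3_basis a z z \<in> I3" using that by (simp add: I3_basis_in_I3 chain3_def)
    have orth: "I3_mult (I3_basis a a b) (I3_basis a z z) = (\<lambda>x y z. 0)"
      using False by (intro I3_mult_basis_basis_eq_0) simp
    have "\<not> (z \<le> b \<and> b \<le> z)" using False by auto
    with derivation_Leibniz_zero_product[OF e_aab e_azz orth, of a z z] show ?thesis
      using that by (simp add: I3_mult_basis_left I3_mult_basis_right)
  qed
  have "D (I3_basis a a b) x y z = 0" for x y z
    by (subst supp) (simp add: I3_mult_basis_left row)
  then show ?thesis by (simp add: fun_eq_iff)
qed

lemma derivation_basis:
  assumes "chain3 a b c"
  shows "D (I3_basis a b c) = (\<lambda>x y z. 0)"
proof -
  from assms have "a \<le> b" "b \<le> c" by (simp_all add: chain3_def)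
  then have "I3_basis a b b \<in> I3" "I3_basis b b c \<in> I3"
    by (simp_all add: I3_basis_in_I3 chain3_def)
  from derivation_Leibniz[OF this] show ?thesis
    unfolding I3_mult_basis_chain[OF \<open>a \<le> b\<close> \<open>b \<le> c\<close>]
      derivation_basis_abb[OF \<open>a \<le> b\<close>] derivation_basis_aab[OF \<open>b \<le> c\<close>]
    by (simp add: fun_eq_iff I3_mult_zero_left I3_mult_zero_right)
qed

lemma derivation_eq_0: "f \<in> I3 \<Longrightarrow> D f = (\<lambda>x y z. 0)"
  by (rule I3_linear_map_eq_0[OF derivation_add derivation_scale derivation_basis])

end

theorem theorem4p7:
  fixes D :: "('a::{finite,order} \<Rightarrow> 'a \<Rightarrow> 'a \<Rightarrow> 'r::comm_ring_1) \<Rightarrow> ('a \<Rightarrow> 'a \<Rightarrow> 'a \<Rightarrow> 'r)"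
  assumes "I3_derivation D"
  shows "\<forall>f \<in> I3. D f = (\<lambda>x y z. 0)"
  using derivation_eq_0[OF assms] by blast

end
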